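(* Let $G=(V,E)$ be a graph, $c\ge1$, $\epsilon\in[0,1/3)$, let $\kappa(G)=(V,\kappa(E))$ be an $(\epsilon,c)$-kernel of $G$ with tight nodes $\kappa_T(V)$, and let $M$ be a matching in $\kappa(G)$ such that every augmenting path in $\kappa(G)$ with respect to $M$ has length at least five. Let $F_T$ be the set of tight nodes unmatched in $M$. Then $|F_T|\le(1+3\epsilon)|M|$.
   Context: Let $\mathcal N_v$ denote the set of neighbors of $v$ in $G$. A subgraph $\kappa(G)=(V,\kappa(E))$ with $\kappa(E)\subseteq E$ is given, together with a partition of $V$ into tight nodes $\kappa_T(V)$ and slack nodes $\kappa_S(V)$. For $v\in V$ let $\kappa(\mathcal N_v)=\{u\in\mathcal N_v:(u,v)\in\kappa(E)\}$ (the friends of $v$). For $c\ge1$ and $\epsilon\in[0,1/3)$, $\kappa(G)$ is an $(\epsilon,c)$-kernel of $G$ (w.r.t. this partition) iff: (i) $|\kappa(\mathcal N_v)|\le(1+\epsilon)c$ for all $v\in V$; (ii) $|\kappa(\mathcal N_v)|\ge(1-\epsilon)c$ for all $v\in\kappa_T(V)$; (iii) for all $u,v\in\kappa_S(V)$, if $(u,v)\in E$ then $(u,v)\in\kappa(E)$. Given a matching $M$ in a graph $H$, an augmenting path of length $2k+1$ ($k \ge 0$) is a simple path in $H$ with $2k+1$ edges whose two end nodes are unmatched in $M$ and whose edges alternate between non-$M$ and $M$ edges (first and last edges not in $M$). *)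

theory Defs
  imports Complex_Main
begin

definition graph :: "'a set \<Rightarrow> 'a set set \<Rightarrow> bool" where
  "graph V E \<longleftrightarrow> finite V \<and> (\<forall>e\<in>E. \<exists>u v. e = {u, v} \<and> u \<noteq> v \<and> u \<in> V \<and> v \<in> V)"

definition friends :: "'a set set \<Rightarrow> 'a \<Rightarrow> 'a set" where
  "friends KE v = {u. {u, v} \<in> KE}"

(* (eps,c)-kernel of G=(V,E) with edge set KE, tight nodes T and slack nodes S *)
definition is_kernel ::
  "'a set \<Rightarrow> 'a set set \<Rightarrow> 'a set set \<Rightarrow> 'a set \<Rightarrow> 'a set \<Rightarrow> real \<Rightarrow> real \<Rightarrow> bool" where
  "is_kernel V E KE T S eps c \<longleftrightarrow>
     KE \<subseteq> E \<and> T \<union> S = V \<and> T \<inter> S = {} \<and>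
     (\<forall>v\<in>V. real (card (friends KE v)) \<le> (1 + eps) * c) \<and>
     (\<forall>v\<in>T. real (card (friends KE v)) \<ge> (1 - eps) * c) \<and>
     (\<forall>u\<in>S. \<forall>v\<in>S. {u, v} \<in> E \<longrightarrow> {u, v} \<in> KE)"

definition matching :: "'a set set \<Rightarrow> 'a set set \<Rightarrow> bool" where
  "matching H M \<longleftrightarrow> M \<subseteq> H \<and> (\<forall>e1\<in>M. \<forall>e2\<in>M. e1 \<noteq> e2 \<longrightarrow> e1 \<inter> e2 = {})"

definition matched :: "'a set set \<Rightarrow> 'a \<Rightarrow> bool" where
  "matched M v \<longleftrightarrow> (\<exists>e\<in>M. v \<in> e)"

(* augmenting path in the graph with edge set H w.r.t. M, given as its vertex list;
   it has length (number of edges) length p - 1 *)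
definition augmenting_path :: "'a set set \<Rightarrow> 'a set set \<Rightarrow> 'a list \<Rightarrow> bool" where
  "augmenting_path H M p \<longleftrightarrow>
     distinct p \<and> odd (length p - 1) \<and>
     (\<forall>i. Suc i < length p \<longrightarrow> {p ! i, p ! Suc i} \<in> H \<and>
            ({p ! i, p ! Suc i} \<in> M \<longleftrightarrow> odd i)) \<and>
     \<not> matched M (hd p) \<and> \<not> matched M (last p)"

end

theory Submission
  imports Defs
begin

text \<open>Count the pairs (a, w) with a a free tight node and w a friend of a. Each tight node has
  at least (1 - eps) c friends. Without augmenting paths of length 1 every such w is matched, and
  without augmenting paths of length 3 the two endpoints of a matching edge cannot have distinct
  free friends; hence a matching edge receives at most (1 + eps) c pairs. Comparing both counts
  gives (1 - eps) |F_T| \<le> (1 + eps) |M|, and (1 + eps) / (1 - eps) \<le> 1 + 3 eps for eps < 1/3.\<close>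

lemma graph_edgeE:
  assumes "graph V E" and "e \<in> E"
  obtains u v where "e = {u, v}" "u \<noteq> v" "u \<in> V" "v \<in> V"
  using assms unfolding graph_def by blast

lemma graph_edgeD:
  assumes "graph V E" and "{x, y} \<in> E"
  shows "x \<noteq> y \<and> x \<in> V \<and> y \<in> V"
  using graph_edgeE[OF assms] by (metis doubleton_eq_iff)

lemma friends_sym: "u \<in> friends H v \<longleftrightarrow> v \<in> friends H u"
  by (simp add: friends_def insert_commute)

lemma friends_subset:
  assumes "graph V E" and "H \<subseteq> E"
  shows "friends H v \<subseteq> V"
proof
  fix u assume "u \<in> friends H v"
  then have "{u, v} \<in> E"
    using assms(2) unfolding friends_def by blast
  then show "u \<in> V"
    using graph_edgeD[OF assms(1)] by blast
qed

lemma finite_friends: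
  assumes "graph V E" and "H \<subseteq> E"
  shows "finite (friends H v)"
proof (rule finite_subset)
  show "friends H v \<subseteq> V"
    using assms by (rule friends_subset)
  show "finite V"
    using assms(1) by (simp add: graph_def)
qed

lemma finite_subgraph_edges:
  assumes "graph V E" and "H \<subseteq> E"
  shows "finite H"
proof -
  have "H \<subseteq> Pow V"
  proof
    fix e assume "e \<in> H"
    then show "e \<in> Pow V"
      using assms by (auto elim: graph_edgeE)
  qed
  moreover have "finite (Pow V)"
    using assms(1) by (simp add: graph_def)
  ultimately show ?thesis
    by (rule finite_subset)
qed

lemma augmenting_path_edge:
  assumes "{a, w} \<in> H" and "a \<noteq> w" and "\<not> matched M a" and "\<not> matched M w"
  shows "augmenting_path H M [a, w]"
proof -
  have "{a, w} \<notin> M"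
    using assms(3) unfolding matched_def by blast
  then show ?thesis
    using assms unfolding augmenting_path_def by (auto simp: less_Suc_eq)
qed

lemma augmenting_path_via_matched_edge:
  assumes "M \<subseteq> H" and "{a, u} \<in> H" and "{u, v} \<in> M" and "{v, b} \<in> H"
    and "u \<noteq> v" and "a \<noteq> b" and "\<not> matched M a" and "\<not> matched M b"
  shows "augmenting_path H M [a, u, v, b]"
proof -
  have "matched M u" "matched M v"
    using assms(3) unfolding matched_def by auto
  moreover have "{a, u} \<notin> M" "{v, b} \<notin> M"
    using assms(7,8) unfolding matched_def by auto
  ultimately show ?thesis
    using assms unfolding augmenting_path_def
    by (auto simp: less_Suc_eq nth_Cons split: nat.splits)
qed

lemma friend_of_free_is_matched:
  assumes "graph V E" and "H \<subseteq> E"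
    and no_short: "\<forall>p. augmenting_path H M p \<longrightarrow> length p - 1 \<ge> 5"
    and "\<not> matched M a" and "w \<in> friends H a"
  shows "matched M w"
proof (rule ccontr)
  assume "\<not> matched M w"
  have "{a, w} \<in> H"
    using assms(5) unfolding friends_def by (simp add: insert_commute)
  moreover have "a \<noteq> w"
    using graph_edgeD[OF assms(1)] \<open>{a, w} \<in> H\<close> assms(2) by blast
  ultimately have "augmenting_path H M [a, w]"
    using assms(4) \<open>\<not> matched M w\<close> by (rule augmenting_path_edge)
  then show False
    using no_short by fastforce
qed

lemma free_friends_of_matched_edge_eq:
  assumes "graph V E" and "H \<subseteq> E" and "matching H M"
    and no_short: "\<forall>p. augmenting_path H M p \<longrightarrow> length p - 1 \<ge> 5"
    and "{u, v} \<in> M" and "a \<in> friends H u" and "b \<in> friends H v"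
    and "\<not> matched M a" and "\<not> matched M b"
  shows "a = b"
proof (rule ccontr)
  assume "a \<noteq> b"
  have "M \<subseteq> H"
    using assms(3) unfolding matching_def by blast
  have "{a, u} \<in> H" "{v, b} \<in> H"
    using assms(6,7) unfolding friends_def by (auto simp: insert_commute)
  moreover have "u \<noteq> v"
    using graph_edgeD[OF assms(1)] assms(2,5) \<open>M \<subseteq> H\<close> by blast
  ultimately have "augmenting_path H M [a, u, v, b]"
    using augmenting_path_via_matched_edge[OF \<open>M \<subseteq> H\<close> _ assms(5)] \<open>a \<noteq> b\<close> assms(8,9)
    by blast
  then show False
    using no_short by fastforce
qed

lemma card_free_friends_of_matched_edge_le:
  assumes "graph V E" and "H \<subseteq> E" and "matching H M"
    and no_short: "\<forall>p. augmenting_path H M p \<longrightarrow> length p - 1 \<ge> 5"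
    and free: "\<forall>a\<in>F. \<not> matched M a"
    and deg: "\<forall>x\<in>V. real (card (friends H x)) \<le> D"
    and uv: "{u, v} \<in> M"
  shows "real (card (friends H u \<inter> F) + card (friends H v \<inter> F)) \<le> D"
proof -
  have "M \<subseteq> H"
    using assms(3) unfolding matching_def by blast
  then have "u \<in> V" "v \<in> V"
    using graph_edgeD[OF assms(1)] assms(2) uv by blast+
  have fin: "finite (friends H x)" for x
    using assms(1,2) by (rule finite_friends)
  have card_le_deg: "card (friends H x \<inter> F) \<le> card (friends H x)" for x
    using fin by (simp add: card_mono)
  have same: "a = b" if "a \<in> friends H u \<inter> F" "b \<in> friends H v \<inter> F" for a b
    using free_friends_of_matched_edge_eq[OF assms(1-4) uv] free that by blast
  consider "friends H u \<inter> F = {}" | "friends H v \<inter> F = {}"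
    | a where "friends H u \<inter> F = {a}" "friends H v \<inter> F = {a}"
  proof (cases "friends H u \<inter> F = {} \<or> friends H v \<inter> F = {}")
    case False
    then obtain a b where "a \<in> friends H u \<inter> F" "b \<in> friends H v \<inter> F"
      by blast
    with same have "friends H u \<inter> F = {a}" "friends H v \<inter> F = {a}"
      by blast+
    then show ?thesis using that(3) by blast
  qed (use that in blast)+
  then show ?thesis
  proof cases
    case 1
    then show ?thesis
      using card_le_deg[of v] deg \<open>v \<in> V\<close> by force
  next
    case 2
    then show ?thesis
      using card_le_deg[of u] deg \<open>u \<in> V\<close> by force
  next
    case (3 a)
    have "v \<in> friends H u"
      using uv \<open>M \<subseteq> H\<close> unfolding friends_def by (auto simp: insert_commute)
    moreover have "a \<noteq> v"
      using 3 free uv unfolding matched_def by blast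
    ultimately have "card {a, v} \<le> card (friends H u)"
      using 3 fin by (intro card_mono) auto
    then have "2 \<le> real (card (friends H u))"
      using \<open>a \<noteq> v\<close> by simp
    then show ?thesis
      using 3 deg \<open>u \<in> V\<close> by force
  qed
qed

text \<open>Both sides count the pairs (a, w) with a \<in> F and w a friend of a: every such w is matched,
  hence lies in exactly one edge of M.\<close>

lemma sum_card_friends_free_eq:
  assumes "graph V E" and "H \<subseteq> E" and "matching H M"
    and no_short: "\<forall>p. augmenting_path H M p \<longrightarrow> length p - 1 \<ge> 5"
    and "finite F" and free: "\<forall>a\<in>F. \<not> matched M a"
  shows "(\<Sum>a\<in>F. card (friends H a))
    = (\<Sum>e\<in>M. \<Sum>w\<in>e. card (friends H w \<inter> F))"
proof -
  have "M \<subseteq> H" and disjoint: "\<forall>e\<in>M. \<forall>e'\<in>M. e \<noteq> e' \<longrightarrow> e \<inter> e' = {}"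
    using assms(3) unfolding matching_def by blast+
  have finM: "finite M"
    using finite_subset[OF \<open>M \<subseteq> H\<close> finite_subgraph_edges[OF assms(1,2)]] .
  have fin_edge: "\<forall>e\<in>M. finite e"
  proof
    fix e assume "e \<in> M"
    then have "e \<in> E"
      using \<open>M \<subseteq> H\<close> assms(2) by blast
    then show "finite e"
      using assms(1) by (auto elim: graph_edgeE)
  qed
  have "{w \<in> \<Union>M. w \<in> friends H a} = friends H a" if "a \<in> F" for a
  proof -
    have "matched M w" if "w \<in> friends H a" for w
      using friend_of_free_is_matched[OF assms(1,2) no_short] free \<open>a \<in> F\<close> that by blast
    then show ?thesis
      unfolding matched_def by blast
  qed
  then have "(\<Sum>a\<in>F. card (friends H a)) = (\<Sum>a\<in>F. card {w \<in> \<Union>M. w \<in> friends H a})"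
    by simp
  also have "\<dots> = (\<Sum>w\<in>\<Union>M. card {a \<in> F. w \<in> friends H a})"
    using sum.swap_restrict[of F "\<Union>M" "\<lambda>_ _. 1::nat"] finM fin_edge assms(5) by simp
  also have "\<dots> = (\<Sum>w\<in>\<Union>M. card (friends H w \<inter> F))"
    by (intro sum.cong arg_cong[where f = card]) (auto simp: friends_sym)
  also have "\<dots> = (\<Sum>e\<in>M. \<Sum>w\<in>e. card (friends H w \<inter> F))"
    using sum.UNION_disjoint[of M "\<lambda>e. e"] finM fin_edge disjoint by simp
  finally show ?thesis .
qed

lemma sum_card_friends_free_le:
  assumes "graph V E" and "H \<subseteq> E" and "matching H M"
    and no_short: "\<forall>p. augmenting_path H M p \<longrightarrow> length p - 1 \<ge> 5"
    and "finite F" and free: "\<forall>a\<in>F. \<not> matched M a"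
    and deg: "\<forall>x\<in>V. real (card (friends H x)) \<le> D"
  shows "(\<Sum>a\<in>F. real (card (friends H a))) \<le> real (card M) * D"
proof -
  have "(\<Sum>e\<in>M. real (\<Sum>w\<in>e. card (friends H w \<inter> F))) \<le> real (card M) * D"
  proof (rule sum_bounded_above)
    fix e assume "e \<in> M"
    then have "e \<in> E"
      using assms(2,3) unfolding matching_def by blast
    then obtain u v where "e = {u, v}" "u \<noteq> v"
      using assms(1) by (elim graph_edgeE)
    then show "real (\<Sum>w\<in>e. card (friends H w \<inter> F)) \<le> D"
      using card_free_friends_of_matched_edge_le[OF assms(1-4) free deg] \<open>e \<in> M\<close> by simp
  qed
  then show ?thesis
    using sum_card_friends_free_eq[OF assms(1-6)] by (simp flip: of_nat_sum)
qed

lemma kernel_ratio_bound: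
  fixes k m eps c :: real
  assumes "k * ((1 - eps) * c) \<le> m * ((1 + eps) * c)"
    and "c > 0" and "0 \<le> eps" and "eps < 1/3" and "m \<ge> 0"
  shows "k \<le> (1 + 3 * eps) * m"
proof -
  have "0 \<le> eps * (1 - 3 * eps)"
    using assms(3,4) by simp
  then have "1 + eps \<le> (1 + 3 * eps) * (1 - eps)"
    by (simp add: algebra_simps)
  have "k * (1 - eps) \<le> m * (1 + eps)"
    using assms(1,2) by (simp add: mult.assoc[symmetric])
  also have "\<dots> \<le> m * ((1 + 3 * eps) * (1 - eps))"
    using \<open>1 + eps \<le> (1 + 3 * eps) * (1 - eps)\<close> assms(5) by (rule mult_left_mono)
  finally have "k * (1 - eps) \<le> (1 + 3 * eps) * m * (1 - eps)"
    by (simp add: algebra_simps)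
  then show ?thesis
    using assms(4) by simp
qed

theorem lemma3p14:
  fixes V :: "'a set" and E KE M :: "'a set set" and T S :: "'a set"
    and eps c :: real
  assumes "graph V E"
    and "c \<ge> 1" and "0 \<le> eps" and "eps < 1/3"
    and "is_kernel V E KE T S eps c"
    and "matching KE M"
    and "\<forall>p. augmenting_path KE M p \<longrightarrow> length p - 1 \<ge> 5"
  shows "real (card {v \<in> T. \<not> matched M v}) \<le> (1 + 3 * eps) * real (card M)"
proof -
  define F where "F = {v \<in> T. \<not> matched M v}"
  have KE: "KE \<subseteq> E" and "T \<subseteq> V"
    and deg: "\<forall>x\<in>V. real (card (friends KE x)) \<le> (1 + eps) * c"
    and tight: "\<forall>x\<in>T. (1 - eps) * c \<le> real (card (friends KE x))"
    using assms(5) unfolding is_kernel_def by auto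
  have "finite V"
    using assms(1) by (simp add: graph_def)
  then have "finite F"
    using \<open>T \<subseteq> V\<close> finite_subset unfolding F_def by fastforce
  have "real (card F) * ((1 - eps) * c) = (\<Sum>a\<in>F. (1 - eps) * c)"
    by simp
  also have "\<dots> \<le> (\<Sum>a\<in>F. real (card (friends KE a)))"
    using tight unfolding F_def by (intro sum_mono) auto
  also have "\<dots> \<le> real (card M) * ((1 + eps) * c)"
    using sum_card_friends_free_le[OF assms(1) KE assms(6,7) \<open>finite F\<close> _ deg]
    unfolding F_def by blast
  finally have "real (card F) \<le> (1 + 3 * eps) * real (card M)"
    by (rule kernel_ratio_bound) (use assms(2-4) in auto)
  then show ?thesis
    unfolding F_def .
qed

end
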